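(* Assume (A1). Let $1\le r\le r'\le t$ and suppose $D_1=\dots=D_t$. Then for every pair of indices $i,j\in\{1,\dots,n\}$, $$\mathbb{E}\left|\hat C^{[r]}_{ij}(t)-\hat C^{[r']}_{ij}(t)\right|\le\sqrt{\frac1r-\frac1{r'}}.$$
   Context: Let $\ell_1,\dots,\ell_n:\mathbb{R}^d\to\{-1,1\}$ be functions and $X_1,X_2,\dots$ random inputs with $X_k\sim D_k$. (A1): for every finite $t$, $(X_1,\dots,X_t)\sim\prod_{k=1}^tD_k$. Empirical correlation matrix $\hat{\bm C}^{[r]}(t)=\frac1r\sum_{k=t-r+1}^t\bm v_k\bm v_k^T$ with $\bm v_k=(\ell_1(X_k),\dots,\ell_n(X_k))^T$. *)

theory Defs
  imports "HOL-Probability.Probability"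
begin

definition emp_corr ::
  "(nat \<Rightarrow> 'x \<Rightarrow> real) \<Rightarrow> (nat \<Rightarrow> 'w \<Rightarrow> 'x) \<Rightarrow> nat \<Rightarrow> nat \<Rightarrow> nat \<Rightarrow> nat \<Rightarrow> 'w \<Rightarrow> real"
  where "emp_corr L X r t i j w =
     (1 / real r) * (\<Sum>k\<in>{t - r + 1..t}. L i (X k w) * L j (X k w))"

end

(* The difference of the two window averages is a weighted sum Z = sum_k c_k Y_k of the i.i.d.
   variables Y_k = l_i(X_k) l_j(X_k), with weights c_k = 1/r - 1/r' on the short window and
   c_k = -1/r' on the rest of the long one. The weights sum to 0, so the common mean cancels and independence gives
   E[Z^2] = sum_k c_k^2 Var(Y_k) <= sum_k c_k^2 = 1/r - 1/r', since Y_k^2 = 1. Finally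
   E|Z| <= sqrt(E[Z^2]). *)

theory Submission
  imports Defs
begin

lemma (in prob_space) expectation_abs_le_sqrt_second_moment:
  fixes Z :: "'a \<Rightarrow> real"
  assumes [measurable]: "Z \<in> borel_measurable M"
    and Z_sq: "integrable M (\<lambda>w. (Z w)\<^sup>2)"
  shows "expectation (\<lambda>w. \<bar>Z w\<bar>) \<le> sqrt (expectation (\<lambda>w. (Z w)\<^sup>2))"
proof -
  have abs_int: "integrable M (\<lambda>w. \<bar>Z w\<bar>)"
    by (rule square_integrable_imp_integrable) (use Z_sq in simp_all)
  have "0 \<le> variance (\<lambda>w. \<bar>Z w\<bar>)"
    by (rule variance_positive)
  also have "\<dots> = expectation (\<lambda>w. (Z w)\<^sup>2) - (expectation (\<lambda>w. \<bar>Z w\<bar>))\<^sup>2"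
    using variance_eq[of "\<lambda>w. \<bar>Z w\<bar>"] abs_int Z_sq by simp
  finally have "(expectation (\<lambda>w. \<bar>Z w\<bar>))\<^sup>2 \<le> expectation (\<lambda>w. (Z w)\<^sup>2)"
    by simp
  then show ?thesis
    by (rule real_le_rsqrt)
qed

lemma (in prob_space) variance_le_second_moment:
  fixes Y :: "'a \<Rightarrow> real"
  assumes "integrable M Y" "integrable M (\<lambda>w. (Y w)\<^sup>2)"
  shows "variance Y \<le> expectation (\<lambda>w. (Y w)\<^sup>2)"
  using variance_eq[OF assms] by simp

lemma (in prob_space)
  fixes Y :: "'i \<Rightarrow> 'a \<Rightarrow> real"
  assumes "finite S" and indep: "indep_vars (\<lambda>_. borel) Y S"
    and sq_int: "\<And>k. k \<in> S \<Longrightarrow> integrable M (\<lambda>w. (Y k w)\<^sup>2)"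
    and centered: "\<And>k. k \<in> S \<Longrightarrow> expectation (Y k) = 0"
  shows integrable_sq_weighted_sum_indep_centered:
      "integrable M (\<lambda>w. (\<Sum>k\<in>S. c k * Y k w)\<^sup>2)"
    and expectation_sq_weighted_sum_indep_centered:
      "expectation (\<lambda>w. (\<Sum>k\<in>S. c k * Y k w)\<^sup>2)
       = (\<Sum>k\<in>S. (c k)\<^sup>2 * expectation (\<lambda>w. (Y k w)\<^sup>2))"
proof -
  have meas: "Y k \<in> borel_measurable M" if "k \<in> S" for k
    using indep that by (simp add: indep_vars_def)
  have int: "integrable M (Y k)" if "k \<in> S" for k
    by (rule square_integrable_imp_integrable) (simp_all add: meas sq_int that)
  have cov: "integrable M (\<lambda>w. Y k w * Y l w)
      \<and> expectation (\<lambda>w. Y k w * Y l w) = (if k = l then expectation (\<lambda>w. (Y k w)\<^sup>2) else 0)"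
    if "k \<in> S" "l \<in> S" for k l
  proof (cases "k = l")
    case True
    then show ?thesis using sq_int[OF that(1)] by (simp add: power2_eq_square)
  next
    case False
    have pair: "indep_vars (\<lambda>_. borel) Y {k, l}"
      using indep_vars_subset[OF indep] that by simp
    have "integrable M (\<lambda>w. \<Prod>m\<in>{k, l}. Y m w)"
      "expectation (\<lambda>w. \<Prod>m\<in>{k, l}. Y m w) = (\<Prod>m\<in>{k, l}. expectation (Y m))"
      using indep_vars_integrable[OF _ pair] indep_vars_lebesgue_integral[OF _ pair] int that
      by auto
    then show ?thesis using False centered that by simp
  qed
  have expand: "(\<lambda>w. (\<Sum>k\<in>S. c k * Y k w)\<^sup>2)
      = (\<lambda>w. \<Sum>k\<in>S. \<Sum>l\<in>S. c k * c l * (Y k w * Y l w))"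
    by (auto simp: power2_eq_square sum_product algebra_simps)
  then show "integrable M (\<lambda>w. (\<Sum>k\<in>S. c k * Y k w)\<^sup>2)"
    using cov by simp
  have "expectation (\<lambda>w. (\<Sum>k\<in>S. c k * Y k w)\<^sup>2)
      = (\<Sum>k\<in>S. \<Sum>l\<in>S. c k * c l * (if k = l then expectation (\<lambda>w. (Y k w)\<^sup>2) else 0))"
    unfolding expand using cov by (simp add: integral_sum)
  also have "\<dots> = (\<Sum>k\<in>S. (c k)\<^sup>2 * expectation (\<lambda>w. (Y k w)\<^sup>2))"
    using \<open>finite S\<close> by (simp add: if_distrib power2_eq_square cong: if_cong)
  finally show "expectation (\<lambda>w. (\<Sum>k\<in>S. c k * Y k w)\<^sup>2)
      = (\<Sum>k\<in>S. (c k)\<^sup>2 * expectation (\<lambda>w. (Y k w)\<^sup>2))" .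
qed

lemma (in prob_space)
  fixes Y :: "'i \<Rightarrow> 'a \<Rightarrow> real"
  assumes "finite S" and indep: "indep_vars (\<lambda>_. borel) Y S"
    and sq_int: "\<And>k. k \<in> S \<Longrightarrow> integrable M (\<lambda>w. (Y k w)\<^sup>2)"
    and mean: "\<And>k. k \<in> S \<Longrightarrow> expectation (Y k) = \<mu>"
    and "sum c S = 0"
  shows integrable_sq_weighted_sum_indep:
      "integrable M (\<lambda>w. (\<Sum>k\<in>S. c k * Y k w)\<^sup>2)"
    and expectation_sq_weighted_sum_indep:
      "expectation (\<lambda>w. (\<Sum>k\<in>S. c k * Y k w)\<^sup>2) = (\<Sum>k\<in>S. (c k)\<^sup>2 * variance (Y k))"
proof -
  define Y' where "Y' = (\<lambda>k w. Y k w - \<mu>)"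
  have meas: "Y k \<in> borel_measurable M" if "k \<in> S" for k
    using indep that by (simp add: indep_vars_def)
  have int: "integrable M (Y k)" if "k \<in> S" for k
    by (rule square_integrable_imp_integrable) (simp_all add: meas sq_int that)
  have sq_int': "integrable M (\<lambda>w. (Y' k w)\<^sup>2)" if "k \<in> S" for k
    using int[OF that] sq_int[OF that] by (simp add: Y'_def power2_diff)
  have centered: "indep_vars (\<lambda>_. borel) Y' S" "\<And>k. k \<in> S \<Longrightarrow> expectation (Y' k) = 0"
    using int mean unfolding Y'_def
    by (auto intro: indep_vars_compose2[OF indep] simp: prob_space)
  have recenter: "(\<lambda>w. (\<Sum>k\<in>S. c k * Y k w)\<^sup>2) = (\<lambda>w. (\<Sum>k\<in>S. c k * Y' k w)\<^sup>2)"
    using \<open>sum c S = 0\<close>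
    by (simp add: Y'_def right_diff_distrib sum_subtractf sum_distrib_right[symmetric])
  show "integrable M (\<lambda>w. (\<Sum>k\<in>S. c k * Y k w)\<^sup>2)"
    unfolding recenter
    by (rule integrable_sq_weighted_sum_indep_centered[OF \<open>finite S\<close> centered(1) sq_int' centered(2)])
  have "expectation (\<lambda>w. (\<Sum>k\<in>S. c k * Y k w)\<^sup>2)
      = (\<Sum>k\<in>S. (c k)\<^sup>2 * expectation (\<lambda>w. (Y' k w)\<^sup>2))"
    unfolding recenter
    by (rule expectation_sq_weighted_sum_indep_centered[OF \<open>finite S\<close> centered(1) sq_int' centered(2)])
  also have "\<dots> = (\<Sum>k\<in>S. (c k)\<^sup>2 * variance (Y k))"
    by (intro sum.cong) (simp_all add: Y'_def mean)
  finally show "expectation (\<lambda>w. (\<Sum>k\<in>S. c k * Y k w)\<^sup>2)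
      = (\<Sum>k\<in>S. (c k)\<^sup>2 * variance (Y k))" .
qed

lemma (in prob_space)
  fixes X :: "'i \<Rightarrow> 'a \<Rightarrow> 'b"
  assumes joint: "distr M (\<Pi>\<^sub>M k\<in>I. N k) (\<lambda>w. \<lambda>k\<in>I. X k w) = (\<Pi>\<^sub>M k\<in>I. D k)"
    and X_meas: "\<And>k. k \<in> I \<Longrightarrow> X k \<in> measurable M (N k)"
    and D_prob: "\<And>k. k \<in> I \<Longrightarrow> prob_space (D k)"
    and D_sets: "\<And>k. k \<in> I \<Longrightarrow> sets (D k) = sets (N k)"
  shows distr_eq_of_joint_distr_eq_PiM: "\<And>k. k \<in> I \<Longrightarrow> distr M (N k) (X k) = D k"
    and indep_vars_of_joint_distr_eq_PiM: "indep_vars N X I"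
proof -
  show marginal: "distr M (N k) (X k) = D k" if k: "k \<in> I" for k
  proof -
    have restrict_meas: "(\<lambda>w. \<lambda>k\<in>I. X k w) \<in> measurable M (\<Pi>\<^sub>M k\<in>I. N k)"
      by (intro measurable_restrict X_meas)
    have "distr M (N k) (X k) = distr M (N k) ((\<lambda>x. x k) \<circ> (\<lambda>w. \<lambda>k\<in>I. X k w))"
      by (intro distr_cong) (auto simp: k)
    also have "\<dots> = distr (\<Pi>\<^sub>M k\<in>I. D k) (N k) (\<lambda>x. x k)"
      by (subst joint[symmetric], rule distr_distr[symmetric])
         (auto intro!: restrict_meas measurable_component_singleton k)
    also have "\<dots> = distr (\<Pi>\<^sub>M k\<in>I. D k) (D k) (\<lambda>x. x k)"
      by (intro distr_cong) (auto simp: D_sets k)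
    also have "\<dots> = D k"
      by (rule distr_PiM_component) (auto intro: D_prob k)
    finally show ?thesis .
  qed
  show "indep_vars N X I"
  proof (cases "I = {}")
    case True
    then show ?thesis by (simp add: indep_vars_def indep_sets_def)
  next
    case False
    have "(\<Pi>\<^sub>M k\<in>I. D k) = (\<Pi>\<^sub>M k\<in>I. distr M (N k) (X k))"
      by (intro PiM_cong) (auto simp: marginal)
    then show ?thesis
      using joint X_meas by (subst indep_vars_iff_distr_eq_PiM'[OF False]) auto
  qed
qed

definition nested_mean_weight :: "'i set \<Rightarrow> 'i set \<Rightarrow> 'i \<Rightarrow> real" where
  "nested_mean_weight A B k = of_bool (k \<in> A) / real (card A) - 1 / real (card B)"

lemma mean_diff_eq_weighted_sum:
  fixes f :: "'i \<Rightarrow> real"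
  assumes "A \<subseteq> B" "finite B"
  shows "sum f A / real (card A) - sum f B / real (card B)
       = (\<Sum>k\<in>B. nested_mean_weight A B k * f k)"
proof -
  have "sum f A = (\<Sum>k\<in>B. if k \<in> A then f k else 0)"
    using assms by (simp add: Int_absorb1 Int_absorb2 flip: sum.inter_restrict)
  also have "\<dots> = (\<Sum>k\<in>B. of_bool (k \<in> A) * f k)"
    by (intro sum.cong) auto
  finally have "sum f A = (\<Sum>k\<in>B. of_bool (k \<in> A) * f k)" .
  then show ?thesis
    by (simp add: nested_mean_weight_def left_diff_distrib sum_subtractf sum_divide_distrib)
qed

lemma
  assumes "A \<subseteq> B" "finite B" "A \<noteq> {}"
  shows sum_nested_mean_weight: "(\<Sum>k\<in>B. nested_mean_weight A B k) = 0"
    and sum_nested_mean_weight_sq: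
      "(\<Sum>k\<in>B. (nested_mean_weight A B k)\<^sup>2) = 1 / real (card A) - 1 / real (card B)"
proof -
  define a b where "a = real (card A)" and "b = real (card B)"
  have count: "(\<Sum>k\<in>B. of_bool (k \<in> A)) = a"
    using assms by (simp add: a_def Int_absorb1 Int_absorb2 flip: sum.inter_restrict)
  have "a \<noteq> 0" "b \<noteq> 0"
    using assms finite_subset by (auto simp: a_def b_def card_eq_0_iff)
  then show "(\<Sum>k\<in>B. nested_mean_weight A B k) = 0"
    using count by (simp add: nested_mean_weight_def sum_subtractf b_def flip: a_def sum_divide_distrib)
  have "(nested_mean_weight A B k)\<^sup>2 = of_bool (k \<in> A) * (1 / a\<^sup>2 - 2 / (a * b)) + 1 / b\<^sup>2" for k
    by (cases "k \<in> A") (simp_all add: nested_mean_weight_def a_def b_def power2_diff power_divide)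
  then have "(\<Sum>k\<in>B. (nested_mean_weight A B k)\<^sup>2) = a * (1 / a\<^sup>2 - 2 / (a * b)) + b * (1 / b\<^sup>2)"
    using count by (simp add: sum.distrib b_def flip: sum_distrib_right)
  also have "\<dots> = 1 / a - 1 / b"
    using \<open>a \<noteq> 0\<close> \<open>b \<noteq> 0\<close> by (simp add: field_simps power2_eq_square)
  finally show "(\<Sum>k\<in>B. (nested_mean_weight A B k)\<^sup>2) = 1 / real (card A) - 1 / real (card B)"
    by (simp only: a_def b_def)
qed

lemma (in prob_space) expectation_abs_nested_mean_diff_le:
  fixes Y :: "'i \<Rightarrow> 'a \<Rightarrow> real"
  assumes "A \<subseteq> B" "finite B" "A \<noteq> {}"
    and indep: "indep_vars (\<lambda>_. borel) Y B"
    and sq_int: "\<And>k. k \<in> B \<Longrightarrow> integrable M (\<lambda>w. (Y k w)\<^sup>2)"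
    and mean: "\<And>k. k \<in> B \<Longrightarrow> expectation (Y k) = \<mu>"
    and var: "\<And>k. k \<in> B \<Longrightarrow> variance (Y k) \<le> v"
  shows "expectation (\<lambda>w. \<bar>(\<Sum>k\<in>A. Y k w) / real (card A) - (\<Sum>k\<in>B. Y k w) / real (card B)\<bar>)
    \<le> sqrt (v * (1 / real (card A) - 1 / real (card B)))"
proof -
  define c where "c = nested_mean_weight A B"
  define Z where "Z w = (\<Sum>k\<in>B. c k * Y k w)" for w
  have "sum c B = 0"
    using sum_nested_mean_weight[OF assms(1-3)] by (simp add: c_def)
  note moments = integrable_sq_weighted_sum_indep[OF \<open>finite B\<close> indep sq_int mean this]
    expectation_sq_weighted_sum_indep[OF \<open>finite B\<close> indep sq_int mean this]
  have Z_meas: "Z \<in> borel_measurable M"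
    unfolding Z_def using indep
    by (intro borel_measurable_sum borel_measurable_times borel_measurable_const)
      (auto simp: indep_vars_def)
  have "expectation (\<lambda>w. (Z w)\<^sup>2) = (\<Sum>k\<in>B. (c k)\<^sup>2 * variance (Y k))"
    unfolding Z_def by (rule moments(2))
  also have "\<dots> \<le> (\<Sum>k\<in>B. (c k)\<^sup>2 * v)"
    using var by (intro sum_mono mult_left_mono) auto
  also have "\<dots> = v * (1 / real (card A) - 1 / real (card B))"
    using sum_nested_mean_weight_sq[OF assms(1-3)] by (simp add: c_def mult.commute flip: sum_distrib_left)
  finally have second_moment: "expectation (\<lambda>w. (Z w)\<^sup>2) \<le> v * (1 / real (card A) - 1 / real (card B))" .
  have "expectation (\<lambda>w. \<bar>Z w\<bar>) \<le> sqrt (expectation (\<lambda>w. (Z w)\<^sup>2))"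
    using Z_meas moments(1) unfolding Z_def by (rule expectation_abs_le_sqrt_second_moment)
  also have "\<dots> \<le> sqrt (v * (1 / real (card A) - 1 / real (card B)))"
    using second_moment by (rule real_sqrt_le_mono)
  finally show ?thesis
    using mean_diff_eq_weighted_sum[OF assms(1,2)] by (simp add: Z_def c_def)
qed

theorem proposition5:
  fixes M :: "'w measure"
    and X :: "nat \<Rightarrow> 'w \<Rightarrow> real ^ 'd"
    and D :: "nat \<Rightarrow> (real ^ 'd) measure"
    and L :: "nat \<Rightarrow> real ^ 'd \<Rightarrow> real"
    and n r r' t i j :: nat
  assumes "prob_space M"
    and X_meas: "\<And>k. X k \<in> borel_measurable M"
    and D_prob: "\<And>k. prob_space (D k)"
    and D_sets: "\<And>k. sets (D k) = sets borel"
    and l_meas: "\<And>a. a \<in> {1..n} \<Longrightarrow> L a \<in> borel_measurable borel"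
    and l_vals: "\<And>a x. a \<in> {1..n} \<Longrightarrow> L a x \<in> {-1, 1}"
    and A1: "\<And>T. distr M (PiM {1..T} (\<lambda>_. borel)) (\<lambda>w. \<lambda>k\<in>{1..T}. X k w)
                   = PiM {1..T} D"
    and "1 \<le> r" and "r \<le> r'" and "r' \<le> t"
    and same_dist: "\<And>k. k \<in> {1..t} \<Longrightarrow> D k = D 1"
    and "i \<in> {1..n}" and "j \<in> {1..n}"
  shows "prob_space.expectation M
           (\<lambda>w. \<bar>emp_corr L X r t i j w - emp_corr L X r' t i j w\<bar>)
         \<le> sqrt (1 / real r - 1 / real r')"
proof -
  interpret prob_space M by fact
  define g where "g x = L i x * L j x" for x
  define Y where "Y k = g \<circ> X k" for k
  define A B where "A = {t - r + 1..t}" and "B = {t - r' + 1..t}"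
  have g_meas: "g \<in> borel_measurable borel"
    unfolding g_def using l_meas \<open>i \<in> {1..n}\<close> \<open>j \<in> {1..n}\<close> by measurable
  have Y_sq: "(Y k w)\<^sup>2 = 1" for k w
    using l_vals[OF \<open>i \<in> {1..n}\<close>, of "X k w"] l_vals[OF \<open>j \<in> {1..n}\<close>, of "X k w"]
    by (auto simp: Y_def g_def)
  have Y_int: "integrable M (Y k)" for k
    by (rule integrable_const_bound[where B=1])
      (use g_meas X_meas Y_sq in \<open>auto simp: Y_def abs_square_eq_1\<close>)
  have indep: "indep_vars (\<lambda>_. borel) Y {1..t}"
    using indep_vars_of_joint_distr_eq_PiM[OF A1] X_meas D_prob D_sets
    unfolding Y_def comp_def by (intro indep_vars_compose2[where Y="\<lambda>_. g"]) (auto simp: g_meas)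
  have mean: "expectation (Y k) = integral\<^sup>L (D 1) g" if "k \<in> {1..t}" for k
    using distr_eq_of_joint_distr_eq_PiM[OF A1 _ _ _ that] X_meas D_prob D_sets same_dist[OF that]
    by (simp add: Y_def comp_def integral_distr[OF X_meas g_meas, symmetric])
  have var: "variance (Y k) \<le> 1" for k
    using variance_le_second_moment[OF Y_int] Y_sq by (simp add: prob_space)
  have window: "A \<subseteq> B" "B \<subseteq> {1..t}" "A \<noteq> {}" "card A = r" "card B = r'"
    using \<open>1 \<le> r\<close> \<open>r \<le> r'\<close> \<open>r' \<le> t\<close> by (auto simp: A_def B_def)
  have "expectation (\<lambda>w. \<bar>(\<Sum>k\<in>A. Y k w) / real (card A) - (\<Sum>k\<in>B. Y k w) / real (card B)\<bar>)
      \<le> sqrt (1 * (1 / real (card A) - 1 / real (card B)))"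
  proof (rule expectation_abs_nested_mean_diff_le)
    show "indep_vars (\<lambda>_. borel) Y B"
      using indep_vars_subset[OF indep] window by blast
    show "expectation (Y k) = integral\<^sup>L (D 1) g" if "k \<in> B" for k
      using mean window that by blast
  qed (use window Y_sq var in \<open>auto simp: B_def\<close>)
  then show ?thesis
    using window by (simp add: emp_corr_def A_def B_def Y_def g_def sum_divide_distrib)
qed

end
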